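(* Assume the abundance condition (A). Then for every $\boldsymbol m\in[0,1]^2$ an equilibrium exists, and in every equilibrium the machine rental rate is $r^*=F(\boldsymbol m)$ and the wage is $w^*=\max\{\bar w_s,\bar w_b,\bar w_t\}$. Every equilibrium allocation maximizes total output $Y$ over all feasible allocations. Moreover, together with these prices the following allocations form an equilibrium (and, whenever the maximum $\max\{\bar w_s,\bar w_b,\bar w_t\}$ is attained by exactly one of the three numbers, they form the unique equilibrium allocation): (i) if $\boldsymbol m\in R_s$: $\alpha_s^*=1$ and $\mu_s^*=\mu$ (only single-layer firms); (ii) if $\boldsymbol m\in R_b$: $\alpha_b^*=1$, $\mu_b^*=n(\boldsymbol m)$, $\mu_s^*=\mu-\mu_b^*$ (only bottom-automated and single-layer automated firms); (iii) if $\boldsymbol m\in R_t$: $\alpha_t^*=1$, $\mu_t^*=1/n(\boldsymbol h)$, $\mu_s^*=\mu-\mu_t^*$ (only top-automated and single-layer automated firms).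
   Context: Fix a cumulative distribution function $F$ on $[0,1]^2$ with a density $f$ that has full support on $[0,1]^2$; a problem $\boldsymbol x=(x_1,x_2)$ is drawn from $F$. Fix a communication cost $c\in(0,1)$, human knowledge $\boldsymbol h=(h_1,h_2)\in(0,1)^2$ (a unit mass of identical humans, each with one unit of time), and a mass $\mu>0$ of machines, each with one unit of time and common knowledge $\boldsymbol m=(m_1,m_2)\in[0,1]^2$. For $\boldsymbol x,\boldsymbol y\in[0,1]^2$ write $\boldsymbol x\vee\boldsymbol y=(\max\{x_1,y_1\},\max\{x_2,y_2\})$, and for $\boldsymbol x$ with $F(\boldsymbol x)<1$ let $n(\boldsymbol x)=\frac{1}{c(1-F(\boldsymbol x))}$. Given a wage $w\ge 0$ and rental rate $r\ge0$ (output price normalized to 1), there are four firm types with profits: single-layer non-automated (one human): $F(\boldsymbol h)-w$; single-layer automated (one machine): $F(\boldsymbol m)-r$; bottom-automated ($b$: one human solver and $n(\boldsymbol m)$ machine workers; available only when $F(\boldsymbol m)<1$): $\Pi_b=n(\boldsymbol m)[F(\boldsymbol m\vee\boldsymbol h)-r]-w$; top-automated ($t$: one machine solver and $n(\boldsymbol h)$ human workers): $\Pi_t=n(\boldsymbol h)[F(\boldsymbol m\vee\boldsymbol h)-w]-r$. A feasible allocation is $(\alpha_s,\alpha_b,\alpha_t,\mu_s,\mu_b,\mu_t)\ge 0$ (masses of humans in single-layer non-automated, $b$, $t$ firms; masses of machines in single-layer automated, $b$, $t$ firms) with $\mu_b=\alpha_b n(\boldsymbol m)$, $\mu_t=\alpha_t/n(\boldsymbol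 h)$, $\alpha_s+\alpha_b+\alpha_t=1$, $\mu_s+\mu_b+\mu_t=\mu$. Its total output is $Y=\alpha_b n(\boldsymbol m)F(\boldsymbol m\vee\boldsymbol h)+\alpha_tF(\boldsymbol m\vee\boldsymbol h)+\alpha_sF(\boldsymbol h)+\mu_sF(\boldsymbol m)$. An equilibrium is a feasible allocation and prices $(w,r)\ge0$ such that every firm type has nonpositive profit and every firm type used with positive mass earns zero profit. Define $\bar w_s=F(\boldsymbol h)$, $\bar w_b=n(\boldsymbol m)\big(F(\boldsymbol m\vee\boldsymbol h)-F(\boldsymbol m)\big)$ (with $\bar w_b:=0$ if $F(\boldsymbol m)=1$), $\bar w_t=F(\boldsymbol m\vee\boldsymbol h)-F(\boldsymbol m)/n(\boldsymbol h)$, and the regions $R_s=\{\boldsymbol m\in[0,1]^2:\bar w_s\ge\max\{\bar w_b,\bar w_t\}\}$, $R_b=\{\boldsymbol m:\bar w_b>\max\{\bar w_s,\bar w_t\}\}$, $R_t=[0,1]^2\setminus(R_s\cup R_b)$. Abundance condition (A): $\mu>\max\Big\{\frac{1}{c(1-F(1,h_2))},\frac{1}{c(1-F(h_1,1))}\Big\}$. *)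

theory Defs
  imports "HOL-Analysis.Analysis"
begin

definition unit_sq :: "(real \<times> real) set" where
  "unit_sq = {0..1} \<times> {0..1}"

definition is_cdf_with_full_support_density ::
  "(real \<times> real \<Rightarrow> real) \<Rightarrow> (real \<times> real \<Rightarrow> real) \<Rightarrow> bool" where
  "is_cdf_with_full_support_density F f \<longleftrightarrow>
     (\<forall>x\<in>unit_sq. 0 \<le> f x) \<and>
     f integrable_on unit_sq \<and>
     integral unit_sq f = 1 \<and>
     (\<forall>x\<in>unit_sq. \<forall>e>0. 0 < integral (unit_sq \<inter> ball x e) f) \<and>
     (\<forall>x\<in>unit_sq. F x = integral ({0..fst x} \<times> {0..snd x}) f)"

definition vee :: "real \<times> real \<Rightarrow> real \<times> real \<Rightarrow> real \<times> real" where
  "vee x y = (max (fst x) (fst y), max (snd x) (snd y))"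

text \<open>n(x) = 1/(c(1-F(x))) (only meaningful when F x < 1).\<close>
definition nsize :: "(real \<times> real \<Rightarrow> real) \<Rightarrow> real \<Rightarrow> real \<times> real \<Rightarrow> real" where
  "nsize F c x = 1 / (c * (1 - F x))"

definition profit_b :: "(real \<times> real \<Rightarrow> real) \<Rightarrow> real \<Rightarrow> real \<times> real \<Rightarrow> real \<times> real
    \<Rightarrow> real \<Rightarrow> real \<Rightarrow> real" where
  "profit_b F c h m w r = nsize F c m * (F (vee m h) - r) - w"

definition profit_t :: "(real \<times> real \<Rightarrow> real) \<Rightarrow> real \<Rightarrow> real \<times> real \<Rightarrow> real \<times> real
    \<Rightarrow> real \<Rightarrow> real \<Rightarrow> real" where
  "profit_t F c h m w r = nsize F c h * (F (vee m h) - w) - r"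

text \<open>An allocation is (alpha_s, alpha_b, alpha_t, mu_s, mu_b, mu_t).
  Bottom-automated firms are only available when F m < 1; otherwise alpha_b = mu_b = 0.\<close>
type_synonym alloc = "real \<times> real \<times> real \<times> real \<times> real \<times> real"

definition feasible :: "(real \<times> real \<Rightarrow> real) \<Rightarrow> real \<Rightarrow> real \<times> real \<Rightarrow> real \<times> real
    \<Rightarrow> real \<Rightarrow> alloc \<Rightarrow> bool" where
  "feasible F c h m \<mu> a = (case a of (a_s, a_b, a_t, m_s, m_b, m_t) \<Rightarrow>
     0 \<le> a_s \<and> 0 \<le> a_b \<and> 0 \<le> a_t \<and> 0 \<le> m_s \<and> 0 \<le> m_b \<and> 0 \<le> m_t \<and>
     (if F m < 1 then m_b = a_b * nsize F c m else a_b = 0 \<and> m_b = 0) \<and>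
     m_t = a_t / nsize F c h \<and>
     a_s + a_b + a_t = 1 \<and> m_s + m_b + m_t = \<mu>)"

definition total_output :: "(real \<times> real \<Rightarrow> real) \<Rightarrow> real \<Rightarrow> real \<times> real \<Rightarrow> real \<times> real
    \<Rightarrow> alloc \<Rightarrow> real" where
  "total_output F c h m a = (case a of (a_s, a_b, a_t, m_s, m_b, m_t) \<Rightarrow>
     a_b * nsize F c m * F (vee m h) + a_t * F (vee m h) + a_s * F h + m_s * F m)"

definition equilibrium :: "(real \<times> real \<Rightarrow> real) \<Rightarrow> real \<Rightarrow> real \<times> real \<Rightarrow> real \<times> real
    \<Rightarrow> real \<Rightarrow> alloc \<Rightarrow> real \<Rightarrow> real \<Rightarrow> bool" where
  "equilibrium F c h m \<mu> a w r = (case a of (a_s, a_b, a_t, m_s, m_b, m_t) \<Rightarrow>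
     feasible F c h m \<mu> a \<and> 0 \<le> w \<and> 0 \<le> r \<and>
     F h - w \<le> 0 \<and> F m - r \<le> 0 \<and>
     (F m < 1 \<longrightarrow> profit_b F c h m w r \<le> 0) \<and>
     profit_t F c h m w r \<le> 0 \<and>
     (0 < a_s \<longrightarrow> F h - w = 0) \<and>
     (0 < m_s \<longrightarrow> F m - r = 0) \<and>
     (0 < a_b \<longrightarrow> profit_b F c h m w r = 0) \<and>
     (0 < a_t \<longrightarrow> profit_t F c h m w r = 0))"

definition wbar_s :: "(real \<times> real \<Rightarrow> real) \<Rightarrow> real \<Rightarrow> real \<times> real \<Rightarrow> real \<times> real \<Rightarrow> real" where
  "wbar_s F c h m = F h"

definition wbar_b :: "(real \<times> real \<Rightarrow> real) \<Rightarrow> real \<Rightarrow> real \<times> real \<Rightarrow> real \<times> real \<Rightarrow> real" where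
  "wbar_b F c h m = (if F m = 1 then 0 else nsize F c m * (F (vee m h) - F m))"

definition wbar_t :: "(real \<times> real \<Rightarrow> real) \<Rightarrow> real \<Rightarrow> real \<times> real \<Rightarrow> real \<times> real \<Rightarrow> real" where
  "wbar_t F c h m = F (vee m h) - F m / nsize F c h"

definition R_s :: "(real \<times> real \<Rightarrow> real) \<Rightarrow> real \<Rightarrow> real \<times> real \<Rightarrow> (real \<times> real) set" where
  "R_s F c h = {m \<in> unit_sq. wbar_s F c h m \<ge> max (wbar_b F c h m) (wbar_t F c h m)}"

definition R_b :: "(real \<times> real \<Rightarrow> real) \<Rightarrow> real \<Rightarrow> real \<times> real \<Rightarrow> (real \<times> real) set" where
  "R_b F c h = {m \<in> unit_sq. wbar_b F c h m > max (wbar_s F c h m) (wbar_t F c h m)}"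

definition R_t :: "(real \<times> real \<Rightarrow> real) \<Rightarrow> real \<Rightarrow> real \<times> real \<Rightarrow> (real \<times> real) set" where
  "R_t F c h = unit_sq - (R_s F c h \<union> R_b F c h)"

definition unique_max :: "real \<Rightarrow> real \<Rightarrow> real \<Rightarrow> bool" where
  "unique_max a b d \<longleftrightarrow> (a > b \<and> a > d) \<or> (b > a \<and> b > d) \<or> (d > a \<and> d > b)"

end

theory Submission imports Defs begin

text \<open>Under the abundance condition single-layer automated firms always operate, which pins the
  rental rate at F m. At that rent a firm of type s, b or t breaks even exactly when the wage
  equals wbar_s, wbar_b or wbar_t respectively, so the equilibria are precisely the feasible
  allocations using only the types whose wage cap is maximal, paying that maximal wage. Total
  output of a feasible allocation is mu F(m) plus the alpha-weighted average of the three caps,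
  which is largest exactly for such allocations.\<close>

lemma abs_coords_le_dist:
  fixes x y :: "real \<times> real"
  shows "\<bar>fst x - fst y\<bar> \<le> dist x y" "\<bar>snd x - snd y\<bar> \<le> dist x y"
  using dist_fst_le[of x y] dist_snd_le[of x y] by (simp_all add: dist_real_def)

lemma cdf_eq_integral:
  assumes "is_cdf_with_full_support_density F f" "x \<in> unit_sq"
  shows "F x = integral ({0..fst x} \<times> {0..snd x}) f"
  using assms unfolding is_cdf_with_full_support_density_def by blast

lemma cdf_integrable_on_box:
  assumes "is_cdf_with_full_support_density F f" "x \<in> unit_sq"
  shows "f integrable_on {0..fst x} \<times> {0..snd x}"
proof -
  have "f integrable_on unit_sq"
    using assms(1) unfolding is_cdf_with_full_support_density_def by blast
  moreover have "cbox (0, 0) x \<subseteq> unit_sq"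
    using assms(2) by (cases x) (auto simp: unit_sq_def cbox_Pair_eq)
  ultimately show ?thesis
    using integrable_on_subcbox by (cases x) (fastforce simp: cbox_Pair_eq)
qed

lemma cdf_integral_mono:
  assumes "is_cdf_with_full_support_density F f"
    and "f integrable_on S" "f integrable_on T" "S \<subseteq> T" "T \<subseteq> unit_sq"
  shows "integral S f \<le> integral T f"
  using assms unfolding is_cdf_with_full_support_density_def
  by (intro integral_subset_le) auto

lemma cdf_mass_ball:
  assumes "is_cdf_with_full_support_density F f" "x \<in> unit_sq" "0 < e"
  shows "f integrable_on (unit_sq \<inter> ball x e)" "0 < integral (unit_sq \<inter> ball x e) f"
  using assms not_integrable_integral
  unfolding is_cdf_with_full_support_density_def by fastforce+

lemma cdf_mono:
  assumes "is_cdf_with_full_support_density F f" "x \<in> unit_sq" "y \<in> unit_sq"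
    and "fst x \<le> fst y" "snd x \<le> snd y"
  shows "F x \<le> F y"
  using assms cdf_integrable_on_box[OF assms(1)]
  by (auto simp: cdf_eq_integral unit_sq_def intro!: cdf_integral_mono)

lemma cdf_nonneg:
  assumes "is_cdf_with_full_support_density F f" "x \<in> unit_sq"
  shows "0 \<le> F x"
  using assms cdf_integrable_on_box[OF assms]
  unfolding is_cdf_with_full_support_density_def
  by (auto simp: unit_sq_def intro!: integral_nonneg)

lemma cdf_le_one:
  assumes "is_cdf_with_full_support_density F f" "x \<in> unit_sq"
  shows "F x \<le> 1"
proof -
  have "F (1, 1) = 1"
    using assms(1) unfolding is_cdf_with_full_support_density_def by (auto simp: unit_sq_def)
  with assms show ?thesis
    using cdf_mono[OF assms(1,2), of "(1, 1)"] by (auto simp: unit_sq_def)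
qed

lemma cdf_pos:
  assumes cdf: "is_cdf_with_full_support_density F f" and x: "x \<in> unit_sq"
    and "0 < fst x" "0 < snd x"
  shows "0 < F x"
proof -
  let ?S = "unit_sq \<inter> ball (0, 0) (min (fst x) (snd x))"
  have "?S \<subseteq> {0..fst x} \<times> {0..snd x}"
  proof
    fix y assume "y \<in> ?S"
    then show "y \<in> {0..fst x} \<times> {0..snd x}"
      using abs_coords_le_dist[of "(0, 0)" y] by (cases y) (auto simp: unit_sq_def)
  qed
  then have "integral ?S f \<le> F x"
    using cdf_mass_ball[OF cdf, of "(0, 0)"] cdf_integrable_on_box[OF cdf x] assms
    by (auto simp: cdf_eq_integral unit_sq_def intro!: cdf_integral_mono)
  moreover have "0 < integral ?S f"
    using cdf_mass_ball[OF cdf, of "(0, 0)"] assms by (simp add: unit_sq_def)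
  ultimately show ?thesis by linarith
qed

text \<open>A ball around the corner (1,1) that misses the box below x carries positive mass.\<close>
lemma cdf_lt_one:
  assumes cdf: "is_cdf_with_full_support_density F f" and x: "x \<in> unit_sq"
    and "fst x < 1 \<or> snd x < 1"
  shows "F x < 1"
proof -
  let ?B = "{0..fst x} \<times> {0..snd x}" and ?S = "unit_sq \<inter> ball (1, 1) (1 - min (fst x) (snd x))"
  have one: "(1, 1) \<in> unit_sq" by (simp add: unit_sq_def)
  have radius: "0 < 1 - min (fst x) (snd x)" using assms by linarith
  note S = cdf_mass_ball[OF cdf one radius]
  have B: "f integrable_on ?B" by (rule cdf_integrable_on_box[OF cdf x])
  have False if "y \<in> ?B" "dist (1, 1) y < 1 - min (fst x) (snd x)" for y
    using that abs_coords_le_dist[of "(1, 1)" y] by (cases y) (auto simp: min_def split: if_splits)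
  then have disjoint: "?B \<inter> ?S = {}" by (meson disjoint_iff IntD2 mem_ball)
  have "F x + integral ?S f = integral (?B \<union> ?S) f"
    using B S disjoint by (simp add: cdf_eq_integral[OF cdf x] integral_Un)
  also have "\<dots> \<le> integral unit_sq f"
    using cdf B S(1) disjoint x cdf_integrable_on_box[OF cdf one]
    by (intro cdf_integral_mono) (auto simp: unit_sq_def integrable_Un)
  also have "\<dots> = 1" using cdf unfolding is_cdf_with_full_support_density_def by blast
  finally show ?thesis using S(2) by linarith
qed

lemma total_output_feasible:
  assumes "feasible F c h m \<mu> (a_s, a_b, a_t, m_s, m_b, m_t)"
  shows "total_output F c h m (a_s, a_b, a_t, m_s, m_b, m_t)
           = \<mu> * F m + a_s * wbar_s F c h m + a_b * wbar_b F c h m + a_t * wbar_t F c h m"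
  using assms
  by (auto simp: feasible_def total_output_def wbar_s_def wbar_b_def wbar_t_def
      algebra_simps split: if_splits)

locale economy =
  fixes F :: "real \<times> real \<Rightarrow> real" and c \<mu> :: real and h m :: "real \<times> real"
  assumes c_pos: "0 < c" and c_lt_one: "c < 1"
    and F_m: "0 \<le> F m" "F m \<le> 1"
    and F_h: "0 < F h" "F h < 1"
    and mu_gt_one: "1 < \<mu>"
    and abundance: "F m < F (vee m h) \<Longrightarrow> nsize F c m < \<mu>"
    and m_unit_sq: "m \<in> unit_sq"
begin

abbreviation wage :: real where
  "wage \<equiv> max (wbar_s F c h m) (max (wbar_b F c h m) (wbar_t F c h m))"

lemma nsize_m_pos: "F m < 1 \<Longrightarrow> 0 < nsize F c m"
  using c_pos by (simp add: nsize_def)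

lemma nsize_h_pos: "0 < nsize F c h"
  using c_pos F_h by (simp add: nsize_def)

lemma inverse_nsize_h_lt_one: "1 / nsize F c h < 1"
proof -
  have "c * (1 - F h) < 1"
    using c_pos c_lt_one F_h by (smt (verit) mult_left_le)
  then show ?thesis by (simp add: nsize_def)
qed

lemma profit_b_at_rent: "F m < 1 \<Longrightarrow> profit_b F c h m w (F m) = wbar_b F c h m - w"
  by (simp add: profit_b_def wbar_b_def)

lemma profit_t_at_rent: "profit_t F c h m w (F m) = nsize F c h * (wbar_t F c h m - w)"
  using nsize_h_pos by (simp add: profit_t_def wbar_t_def algebra_simps)

text \<open>If single-layer automated firms were idle, all machines would work in teams. Top-automated
  teams use fewer machines than humans, and a bottom-automated team that breaks even at a rent
  above F m must raise output, so by abundance it uses fewer machines than there are; hence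
  the machines cannot all be employed.\<close>
lemma equilibrium_rent:
  assumes E: "equilibrium F c h m \<mu> (a_s, a_b, a_t, m_s, m_b, m_t) w r"
  shows "r = F m"
proof (rule ccontr)
  assume "r \<noteq> F m"
  note E = E[unfolded equilibrium_def feasible_def prod.case]
  have alloc: "0 \<le> a_s" "0 \<le> a_b" "0 \<le> a_t" "a_s + a_b + a_t = 1"
    and machines: "m_s + m_b + m_t = \<mu>" using E by simp_all
  have rent: "F m < r" using E \<open>r \<noteq> F m\<close> by auto
  have "m_s = 0" using E \<open>r \<noteq> F m\<close> by auto
  have m_t: "m_t \<le> a_t"
  proof -
    have "m_t = a_t * (1 / nsize F c h)" using E by simp
    also have "\<dots> \<le> a_t"
      using alloc inverse_nsize_h_lt_one by (intro mult_left_le) auto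
    finally show ?thesis .
  qed
  show False
  proof (cases "0 < a_b")
    case True
    have "m_b < a_b * \<mu>"
    proof -
      have F_m: "F m < 1" using E True by (auto split: if_splits)
      have "0 < nsize F c m * (F (vee m h) - r)"
        using E True F_m F_h by (auto simp: profit_b_def)
      then have "F m < F (vee m h)"
        using nsize_m_pos[OF F_m] rent by (simp add: zero_less_mult_iff)
      then show ?thesis
        using E F_m True abundance by (auto split: if_splits)
    qed
    moreover have "a_t \<le> a_t * \<mu>"
      using mult_left_mono[of 1 \<mu> a_t] \<open>0 \<le> a_t\<close> mu_gt_one by simp
    moreover have "(a_b + a_t) * \<mu> \<le> \<mu>"
      using mult_right_mono[of "a_b + a_t" 1 \<mu>] alloc mu_gt_one by simp
    ultimately show False
      using m_t machines \<open>m_s = 0\<close> by (simp add: algebra_simps)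
  next
    case False
    then have "m_b = 0" using E by (auto split: if_splits)
    then show False using m_t alloc machines \<open>m_s = 0\<close> mu_gt_one by linarith
  qed
qed

lemma equilibrium_at_rent_iff:
  "equilibrium F c h m \<mu> (a_s, a_b, a_t, m_s, m_b, m_t) w (F m) \<longleftrightarrow>
     feasible F c h m \<mu> (a_s, a_b, a_t, m_s, m_b, m_t) \<and>
     wbar_s F c h m \<le> w \<and> wbar_b F c h m \<le> w \<and> wbar_t F c h m \<le> w \<and>
     (0 < a_s \<longrightarrow> wbar_s F c h m = w) \<and> (0 < a_b \<longrightarrow> wbar_b F c h m = w) \<and>
     (0 < a_t \<longrightarrow> wbar_t F c h m = w)"
proof -
  have "(F m < 1 \<longrightarrow> profit_b F c h m w (F m) \<le> 0) \<longleftrightarrow> wbar_b F c h m \<le> w"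
    if "F h \<le> w"
    using that F_m F_h by (auto simp: profit_b_at_rent wbar_b_def)
  moreover have "profit_t F c h m w (F m) \<le> 0 \<longleftrightarrow> wbar_t F c h m \<le> w"
    using nsize_h_pos by (simp add: profit_t_at_rent mult_le_0_iff)
  moreover have "profit_t F c h m w (F m) = 0 \<longleftrightarrow> wbar_t F c h m = w"
    using nsize_h_pos by (simp add: profit_t_at_rent)
  moreover have "F m < 1" if "feasible F c h m \<mu> (a_s, a_b, a_t, m_s, m_b, m_t)" "0 < a_b"
    using that by (auto simp: feasible_def split: if_splits)
  ultimately show ?thesis
    using F_m F_h by (auto simp: equilibrium_def wbar_s_def profit_b_at_rent)
qed

lemma equilibrium_iff:
  "equilibrium F c h m \<mu> (a_s, a_b, a_t, m_s, m_b, m_t) w r \<longleftrightarrow>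
     feasible F c h m \<mu> (a_s, a_b, a_t, m_s, m_b, m_t) \<and> r = F m \<and> w = wage \<and>
     (0 < a_s \<longrightarrow> wbar_s F c h m = wage) \<and> (0 < a_b \<longrightarrow> wbar_b F c h m = wage) \<and>
     (0 < a_t \<longrightarrow> wbar_t F c h m = wage)"
proof -
  have "w = wage" if "equilibrium F c h m \<mu> (a_s, a_b, a_t, m_s, m_b, m_t) w (F m)"
  proof -
    have "0 < a_s \<or> 0 < a_b \<or> 0 < a_t"
      using that by (auto simp: equilibrium_def feasible_def)
    then show ?thesis
      using that unfolding equilibrium_at_rent_iff by (auto simp: max_def)
  qed
  then show ?thesis
    using equilibrium_rent[of a_s a_b a_t m_s m_b m_t w r]
    by (auto simp: equilibrium_at_rent_iff)
qed

lemma total_output_le_wage: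
  assumes "feasible F c h m \<mu> a"
  shows "total_output F c h m a \<le> \<mu> * F m + wage"
proof -
  obtain a_s a_b a_t m_s m_b m_t where a: "a = (a_s, a_b, a_t, m_s, m_b, m_t)"
    by (cases a)
  have alloc: "0 \<le> a_s" "0 \<le> a_b" "0 \<le> a_t" "a_s + a_b + a_t = 1"
    using assms a by (auto simp: feasible_def)
  have "a_s * wbar_s F c h m + a_b * wbar_b F c h m + a_t * wbar_t F c h m
          \<le> a_s * wage + a_b * wage + a_t * wage"
    using alloc by (intro add_mono mult_left_mono) auto
  also have "\<dots> = (a_s + a_b + a_t) * wage" by (simp add: algebra_simps)
  also have "\<dots> = wage" using alloc(4) by simp
  finally show ?thesis
    using assms a total_output_feasible by simp
qed

lemma equilibrium_total_output:
  assumes "equilibrium F c h m \<mu> a w r"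
  shows "total_output F c h m a = \<mu> * F m + wage"
proof -
  obtain a_s a_b a_t m_s m_b m_t where a: "a = (a_s, a_b, a_t, m_s, m_b, m_t)"
    by (cases a)
  note E = assms[unfolded a equilibrium_iff]
  have alloc: "0 \<le> a_s" "0 \<le> a_b" "0 \<le> a_t" "a_s + a_b + a_t = 1"
    using E by (auto simp: feasible_def)
  have "a_s * wbar_s F c h m = a_s * wage"
    using E alloc(1) by (cases "a_s = 0") auto
  moreover have "a_b * wbar_b F c h m = a_b * wage"
    using E alloc(2) by (cases "a_b = 0") auto
  moreover have "a_t * wbar_t F c h m = a_t * wage"
    using E alloc(3) by (cases "a_t = 0") auto
  moreover have "total_output F c h m a
      = \<mu> * F m + a_s * wbar_s F c h m + a_b * wbar_b F c h m + a_t * wbar_t F c h m"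
    using E a total_output_feasible by blast
  ultimately have "total_output F c h m a = \<mu> * F m + a_s * wage + a_b * wage + a_t * wage"
    by (simp only:)
  also have "\<dots> = \<mu> * F m + (a_s + a_b + a_t) * wage"
    by (simp add: algebra_simps)
  finally show ?thesis using alloc(4) by simp
qed

lemma equilibrium_efficient:
  assumes "equilibrium F c h m \<mu> a w r" "feasible F c h m \<mu> a'"
  shows "total_output F c h m a' \<le> total_output F c h m a"
  using total_output_le_wage[OF assms(2)] equilibrium_total_output[OF assms(1)] by simp

lemma single_layer_equilibrium:
  assumes "m \<in> R_s F c h"
  shows "equilibrium F c h m \<mu> (1, 0, 0, \<mu>, 0, 0) wage (F m)"
  using assms mu_gt_one by (auto simp: equilibrium_iff feasible_def R_s_def)

lemma single_layer_equilibrium_unique: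
  assumes "m \<in> R_s F c h" "unique_max (wbar_s F c h m) (wbar_b F c h m) (wbar_t F c h m)"
    and "equilibrium F c h m \<mu> a w r"
  shows "a = (1, 0, 0, \<mu>, 0, 0)"
proof -
  obtain a_s a_b a_t m_s m_b m_t where a: "a = (a_s, a_b, a_t, m_s, m_b, m_t)"
    by (cases a)
  have "wbar_b F c h m < wbar_s F c h m" "wbar_t F c h m < wbar_s F c h m"
    using assms(1,2) by (auto simp: R_s_def unique_max_def)
  then show ?thesis
    using assms(3) by (auto simp: a equilibrium_iff feasible_def split: if_splits)
qed

lemma bottom_automated_equilibrium:
  assumes "m \<in> R_b F c h"
  shows "equilibrium F c h m \<mu> (0, 1, 0, \<mu> - nsize F c m, nsize F c m, 0) wage (F m)"
proof -
  have wbar_b: "wbar_s F c h m < wbar_b F c h m" "wbar_t F c h m < wbar_b F c h m"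
    using assms by (auto simp: R_b_def)
  then have F_m_lt_one: "F m < 1"
    using F_m F_h by (auto simp: wbar_s_def wbar_b_def split: if_splits)
  have "0 < nsize F c m * (F (vee m h) - F m)"
    using wbar_b F_h F_m_lt_one by (simp add: wbar_s_def wbar_b_def)
  then have "F m < F (vee m h)"
    using nsize_m_pos[OF F_m_lt_one] by (simp add: zero_less_mult_iff)
  then show ?thesis
    using wbar_b F_m_lt_one nsize_m_pos abundance
    by (auto simp: equilibrium_iff feasible_def less_imp_le)
qed

lemma bottom_automated_equilibrium_unique:
  assumes "m \<in> R_b F c h" and "equilibrium F c h m \<mu> a w r"
  shows "a = (0, 1, 0, \<mu> - nsize F c m, nsize F c m, 0)"
proof -
  obtain a_s a_b a_t m_s m_b m_t where a: "a = (a_s, a_b, a_t, m_s, m_b, m_t)"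
    by (cases a)
  have "wbar_s F c h m < wbar_b F c h m" "wbar_t F c h m < wbar_b F c h m"
    using assms(1) by (auto simp: R_b_def)
  then show ?thesis
    using assms(2) by (auto simp: a equilibrium_iff feasible_def split: if_splits)
qed

lemma top_automated_equilibrium:
  assumes "m \<in> R_t F c h"
  shows "equilibrium F c h m \<mu> (0, 0, 1, \<mu> - 1 / nsize F c h, 0, 1 / nsize F c h) wage (F m)"
proof -
  have "wbar_s F c h m < wbar_t F c h m" "wbar_b F c h m \<le> wbar_t F c h m"
    using assms by (auto simp: R_t_def R_s_def R_b_def)
  moreover have "1 / nsize F c h \<le> \<mu>"
    using inverse_nsize_h_lt_one mu_gt_one by linarith
  ultimately show ?thesis
    using nsize_h_pos by (auto simp: equilibrium_iff feasible_def)
qed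

lemma top_automated_equilibrium_unique:
  assumes "m \<in> R_t F c h" "unique_max (wbar_s F c h m) (wbar_b F c h m) (wbar_t F c h m)"
    and "equilibrium F c h m \<mu> a w r"
  shows "a = (0, 0, 1, \<mu> - 1 / nsize F c h, 0, 1 / nsize F c h)"
proof -
  obtain a_s a_b a_t m_s m_b m_t where a: "a = (a_s, a_b, a_t, m_s, m_b, m_t)"
    by (cases a)
  have "wbar_s F c h m < wbar_t F c h m" "wbar_b F c h m < wbar_t F c h m"
    using assms(1,2) by (auto simp: R_t_def R_s_def R_b_def unique_max_def)
  then show ?thesis
    using assms(3) by (auto simp: a equilibrium_iff feasible_def split: if_splits)
qed

lemma equilibrium_prices:
  "equilibrium F c h m \<mu> a w r \<Longrightarrow> r = F m \<and> w = wage"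
  by (cases a) (simp add: equilibrium_iff)

lemma equilibrium_exists: "\<exists>a w r. equilibrium F c h m \<mu> a w r"
  using m_unit_sq single_layer_equilibrium bottom_automated_equilibrium top_automated_equilibrium
  unfolding R_t_def by blast

end

lemma economy_of_cdf:
  assumes cdf: "is_cdf_with_full_support_density F f"
    and c: "0 < c" "c < 1"
    and h: "0 < fst h" "fst h < 1" "0 < snd h" "snd h < 1"
    and A: "\<mu> > max (1 / (c * (1 - F (1, snd h)))) (1 / (c * (1 - F (fst h, 1))))"
    and m: "m \<in> unit_sq"
  shows "economy F c \<mu> h m"
proof -
  have h_unit_sq: "h \<in> unit_sq" and corners: "(1, snd h) \<in> unit_sq" "(fst h, 1) \<in> unit_sq"
    using h by (auto simp: unit_sq_def mem_Times_iff)
  have corner_lt_one: "F (1, snd h) < 1" "F (fst h, 1) < 1"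
    using cdf_lt_one[OF cdf corners(1)] cdf_lt_one[OF cdf corners(2)] h by auto
  have team_size_le: "1 / (c * (1 - x)) \<le> 1 / (c * (1 - y))" if "x \<le> y" "y < 1" for x y
    using that c by (intro divide_left_mono mult_pos_pos mult_left_mono) auto
  have "c * (1 - F (1, snd h)) \<le> c"
    using c cdf_nonneg[OF cdf corners(1)] by (intro mult_left_le) auto
  then have "c * (1 - F (1, snd h)) < 1" using c by linarith
  moreover have "0 < c * (1 - F (1, snd h))" using c corner_lt_one by simp
  ultimately have "1 < 1 / (c * (1 - F (1, snd h)))" by simp
  then have mu: "1 < \<mu>" using A by linarith
  have abundance: "nsize F c m < \<mu>" if "F m < F (vee m h)"
  proof -
    have "\<not> (fst h \<le> fst m \<and> snd h \<le> snd m)"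
      using that by (cases m) (auto simp: vee_def max_def)
    then have "F m \<le> F (fst h, 1) \<or> F m \<le> F (1, snd h)"
      using cdf_mono[OF cdf m corners(1)] cdf_mono[OF cdf m corners(2)] m
      by (auto simp: unit_sq_def)
    moreover have "nsize F c m \<le> 1 / (c * (1 - K))" if "F m \<le> K" "K < 1" for K
      using team_size_le[OF that] unfolding nsize_def .
    ultimately show ?thesis
      using corner_lt_one A by fastforce
  qed
  show ?thesis
    using c cdf_nonneg[OF cdf m] cdf_le_one[OF cdf m] cdf_pos[OF cdf h_unit_sq] h
      cdf_lt_one[OF cdf h_unit_sq] mu abundance m
    by (simp add: economy_def)
qed

theorem proposition1:
  fixes F f :: "real \<times> real \<Rightarrow> real" and c \<mu> :: real and h :: "real \<times> real"
  assumes cdf: "is_cdf_with_full_support_density F f"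
    and c: "0 < c" "c < 1"
    and h: "0 < fst h" "fst h < 1" "0 < snd h" "snd h < 1"
    and mu: "0 < \<mu>"
    and A: "\<mu> > max (1 / (c * (1 - F (1, snd h)))) (1 / (c * (1 - F (fst h, 1))))"
  shows "\<forall>m \<in> unit_sq.
    (let ws = wbar_s F c h m; wb = wbar_b F c h m; wt = wbar_t F c h m;
         wstar = max ws (max wb wt) in
      (\<exists>a w r. equilibrium F c h m \<mu> a w r) \<and>
      (\<forall>a w r. equilibrium F c h m \<mu> a w r \<longrightarrow> r = F m \<and> w = wstar) \<and>
      (\<forall>a w r. equilibrium F c h m \<mu> a w r \<longrightarrow>
          (\<forall>a'. feasible F c h m \<mu> a' \<longrightarrow> total_output F c h m a' \<le> total_output F c h m a)) \<and>
      (m \<in> R_s F c h \<longrightarrow>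
          equilibrium F c h m \<mu> (1, 0, 0, \<mu>, 0, 0) wstar (F m) \<and>
          (unique_max ws wb wt \<longrightarrow>
             (\<forall>a w r. equilibrium F c h m \<mu> a w r \<longrightarrow> a = (1, 0, 0, \<mu>, 0, 0)))) \<and>
      (m \<in> R_b F c h \<longrightarrow>
          equilibrium F c h m \<mu> (0, 1, 0, \<mu> - nsize F c m, nsize F c m, 0) wstar (F m) \<and>
          (unique_max ws wb wt \<longrightarrow>
             (\<forall>a w r. equilibrium F c h m \<mu> a w r \<longrightarrow>
                a = (0, 1, 0, \<mu> - nsize F c m, nsize F c m, 0)))) \<and>
      (m \<in> R_t F c h \<longrightarrow>
          equilibrium F c h m \<mu> (0, 0, 1, \<mu> - 1 / nsize F c h, 0, 1 / nsize F c h) wstar (F m) \<and>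
          (unique_max ws wb wt \<longrightarrow>
             (\<forall>a w r. equilibrium F c h m \<mu> a w r \<longrightarrow>
                a = (0, 0, 1, \<mu> - 1 / nsize F c h, 0, 1 / nsize F c h)))))"
proof -
  \<comment> \<open>The hypothesis 0 < mu is implied by (A).\<close>
  have E: "economy F c \<mu> h m" if "m \<in> unit_sq" for m
    using economy_of_cdf[OF cdf c h A that] .
  show ?thesis
    unfolding Let_def
    by (intro ballI conjI allI impI; blast intro: E economy.equilibrium_exists
        economy.equilibrium_efficient economy.single_layer_equilibrium
        economy.single_layer_equilibrium_unique economy.bottom_automated_equilibrium
        economy.bottom_automated_equilibrium_unique economy.top_automated_equilibrium
        economy.top_automated_equilibrium_unique dest: economy.equilibrium_prices[OF E])
qed

end
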